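(* Let $n\in\mathbb{Z}$ with $|n|\geq 1$, $\alpha>0$, $R>0$ and $\kappa\in\mathbb{R}$. Suppose $u$ is a nontrivial solution of the $n$-vortex equation $$(ru_r)_r-\frac{n^2}{r}u+\frac{2ru^3}{1+\alpha u^2}-2\kappa ru=0\ \text{ on } (0,R),\qquad u(0)=0,\quad u(R)=0,$$ which has finite energy, i.e. $\mathcal{E}(u)<\infty$. Then $$\kappa<\alpha^{-1}-\frac{r_0^2+n^2}{2R^2},$$ where $r_0\approx 2.404825$ is the first positive zero of the Bessel function $J_0$.
   Context: The energy functional is $\mathcal{E}(u)=\frac12\int_0^R\left\{ru_r^2+\frac{1}{r}u^2+r\ln(1+\alpha u^2)\right\}dr$, where $u=u(r)$ is a real-valued function on $[0,R]$ and $u_r=du/dr$. *)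

theory Defs
  imports "HOL-Analysis.Analysis"
begin

definition bessel_J0 :: "real \<Rightarrow> real" where
  "bessel_J0 x = (\<Sum>k. (-1) ^ k * (x / 2) ^ (2 * k) / (fact k)^2)"

definition bessel_J0_first_zero :: real where
  "bessel_J0_first_zero = Inf {x. 0 < x \<and> bessel_J0 x = 0}"

text \<open>Energy integrand of the functional E(u) (with derivative du of u).\<close>
definition energy_density :: "real \<Rightarrow> (real \<Rightarrow> real) \<Rightarrow> (real \<Rightarrow> real) \<Rightarrow> real \<Rightarrow> real" where
  "energy_density \<alpha> u du r = r * (du r)^2 + (u r)^2 / r + r * ln (1 + \<alpha> * (u r)^2)"

end

theory Submission
  imports Defs
begin

text \<open>
  Write the equation as \<open>(r u')' = c(r) u\<close> with
  \<open>c(r) = n\<^sup>2/r + 2 r (\<kappa> - u\<^sup>2/(1 + \<alpha> u\<^sup>2))\<close>; since \<open>u\<^sup>2/(1 + \<alpha> u\<^sup>2) < 1/\<alpha>\<close>,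
  a large \<open>\<kappa>\<close> makes \<open>c\<close> large.  If \<open>\<kappa>\<close> violated the bound, the polynomial
  \<open>\<phi>(r) = 1 - (9/10) r\<^sup>2/R\<^sup>2\<close>, a stand-in for \<open>J\<^sub>0(r\<^sub>0 r/R)\<close>, would be a strict
  supersolution, \<open>(r \<phi>')' < c \<phi>\<close>, positive on \<open>[0,R]\<close>.  On an arc where \<open>u > 0\<close> the
  Wronskian \<open>r (u' \<phi> - u \<phi>')\<close> is then strictly increasing and has the sign of
  \<open>(u/\<phi>)'\<close>, so \<open>u/\<phi>\<close> cannot rise from a nonpositive value and fall back to one:
  Sturm comparison rules out such arcs, and likewise arcs where \<open>u < 0\<close>.  The only
  information on \<open>r\<^sub>0\<close> needed is \<open>r\<^sub>0 \<le> 5/2\<close>, i.e. \<open>J\<^sub>0(5/2) < 0\<close>.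
\<close>

lemma bessel_J0_powser:
  "bessel_J0 x = (\<Sum>k. ((-1)^k / (fact k)^2) * ((x/2)^2)^k)"
  unfolding bessel_J0_def by (simp add: power_mult)

lemma summable_bessel_J0_coeffs: "summable (\<lambda>k. ((-1)^k / (fact k)^2) * (y::real)^k)"
proof (rule summable_comparison_test')
  show "summable (\<lambda>k. \<bar>y\<bar>^k / fact k)"
    using summable_exp[of "\<bar>y\<bar>"] by (simp add: divide_inverse mult.commute)
  have "\<bar>y\<bar>^k / (fact k)^2 \<le> \<bar>y\<bar>^k / fact k" for k :: nat
    by (intro divide_left_mono) (auto simp: power2_eq_square)
  then show "norm (((-1)^k / (fact k)^2) * y^k) \<le> \<bar>y\<bar>^k / fact k" for k
    by (simp add: abs_mult power_abs)
qed

lemma isCont_bessel_J0: "isCont bessel_J0 x"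
proof -
  have "isCont (\<lambda>y. \<Sum>k. ((-1)^k / (fact k)^2) * y^k) ((x/2)^2)"
    by (rule isCont_powser[OF summable_bessel_J0_coeffs[of "(x/2)^2 + 1"]]) auto
  then show ?thesis
    unfolding bessel_J0_powser[abs_def] by (rule isCont_o2[rotated]) (intro continuous_intros; simp)
qed

lemma bessel_J0_0: "bessel_J0 0 = 1"
  using powser_zero[of "\<lambda>k. (-1)^k / (fact k)^2 :: real"] by (simp add: bessel_J0_powser)

lemma bessel_J0_five_halves_neg: "bessel_J0 (5/2) < 0"
proof -
  define t where "t k = (25/16::real)^k / (fact k)^2" for k
  have summable_t: "summable (\<lambda>k. (-1)^k * t k)"
    using summable_bessel_J0_coeffs[of "25/16"] unfolding t_def by simp
  define b where "b k = t (Suc k)" for k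
  have "(\<lambda>k. (-1)^k * t k) \<longlonglongrightarrow> 0"
    by (rule summable_LIMSEQ_zero[OF summable_t])
  then have "(\<lambda>k. \<bar>(-1)^k * t k\<bar>) \<longlonglongrightarrow> 0"
    by (rule tendsto_rabs_zero)
  then have "t \<longlonglongrightarrow> 0"
    by (simp add: t_def[abs_def] abs_mult)
  then have b_lim: "b \<longlonglongrightarrow> 0"
    unfolding b_def by (rule LIMSEQ_Suc)
  have b_nonneg: "0 \<le> b k" for k
    by (simp add: b_def t_def)
  have b_decr: "b (Suc k) \<le> b k" for k
  proof -
    have "b (Suc k) = b k * ((25/16) / (real k + 2)^2)"
      unfolding b_def t_def fact_Suc by (simp add: power2_eq_square field_simps)
    also have "\<dots> \<le> b k"
    proof (rule mult_left_le[OF _ b_nonneg])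
      have "(2::real)^2 \<le> (real k + 2)^2"
        by (rule power_mono) auto
      then show "(25/16) / (real k + 2)^2 \<le> 1"
        by simp
    qed
    finally show ?thesis .
  qed
  have "bessel_J0 (5/2) = (\<Sum>k. (-1)^k * t k)"
    unfolding bessel_J0_powser t_def by (simp add: power2_eq_square)
  also have "\<dots> = t 0 - (\<Sum>k. (-1)^k * b k)"
    using suminf_split_head[OF summable_t] suminf_minus[OF summable_Leibniz'(1)[OF b_lim b_nonneg b_decr]]
    by (simp add: b_def)
  also have "\<dots> \<le> t 0 - (\<Sum>k<2*2. (-1)^k * b k)"
    using summable_Leibniz'(2)[OF b_lim b_nonneg b_decr, of 2] by simp
  also have "\<dots> < 0"
    by (simp add: b_def t_def numeral_eq_Suc fact_numeral)
  finally show ?thesis .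
qed

lemma bessel_J0_first_zero_sq_le: "bessel_J0_first_zero^2 \<le> 25/4"
proof -
  define Z where "Z = {x. 0 < x \<and> bessel_J0 x = 0}"
  obtain z where z: "0 \<le> z" "z \<le> 5/2" "bessel_J0 z = 0"
    using IVT2[of bessel_J0 "5/2" 0 0] bessel_J0_five_halves_neg bessel_J0_0 isCont_bessel_J0
    by auto
  then have "z \<in> Z"
    using bessel_J0_0 by (auto simp: Z_def intro!: le_neq_trans)
  moreover have "bdd_below Z"
    unfolding Z_def by (rule bdd_belowI[of _ 0]) auto
  ultimately have "0 \<le> Inf Z" "Inf Z \<le> 5/2"
    using cInf_greatest[of Z 0] cInf_lower[of z Z] z by (auto simp: Z_def)
  then have "(Inf Z)^2 \<le> (5/2)^2"
    by (intro power_mono)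
  then show ?thesis
    by (simp add: bessel_J0_first_zero_def Z_def power2_eq_square)
qed

lemma positive_arc:
  fixes v :: "real \<Rightarrow> real"
  assumes "continuous_on {c..d} v" "v c \<le> 0" "v d \<le> 0" "r \<in> {c..d}" "v r > 0"
  obtains a b where "c \<le> a" "a < b" "b \<le> d" "v a \<le> 0" "v b \<le> 0"
    "\<And>x. x \<in> {a<..<b} \<Longrightarrow> v x > 0"
proof -
  define A where "A = {c..r} \<inter> v -` {..0}"
  define B where "B = {r..d} \<inter> v -` {..0}"
  have "closed A" "closed B"
    unfolding A_def B_def using assms(1,4)
    by (auto intro!: continuous_closed_preimage continuous_on_subset[OF assms(1)])
  moreover have "c \<in> A" "d \<in> B" "bdd_above A" "bdd_below B"
    using assms(2-4) by (auto simp: A_def B_def bdd_above_def bdd_below_def)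
  ultimately have "Sup A \<in> A" "Inf B \<in> B"
    using closed_contains_Sup closed_contains_Inf by blast+
  moreover have "v x > 0" if "x \<in> {Sup A<..<Inf B}" for x
  proof (rule ccontr)
    assume "\<not> v x > 0"
    then have "x \<in> A \<or> x \<in> B"
      using that \<open>Sup A \<in> A\<close> \<open>Inf B \<in> B\<close> by (auto simp: A_def B_def)
    then show False
      using that cSup_upper[OF _ \<open>bdd_above A\<close>] cInf_lower[OF _ \<open>bdd_below B\<close>] by fastforce
  qed
  moreover have "Sup A < Inf B"
  proof -
    have "Sup A \<le> r" "r \<le> Inf B" "Sup A \<noteq> r" "Inf B \<noteq> r"
      using \<open>Sup A \<in> A\<close> \<open>Inf B \<in> B\<close> assms(5) by (auto simp: A_def B_def)
    then show ?thesis by linarith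
  qed
  ultimately show ?thesis
    using that[of "Sup A" "Inf B"] by (auto simp: A_def B_def)
qed

lemma nonpos_if_deriv_sign_follows_increasing:
  fixes g g' W :: "real \<Rightarrow> real"
  assumes "a < r" "r < b" "continuous_on {a..b} g" "g a \<le> 0" "g b \<le> 0"
    and g': "\<And>x. x \<in> {a<..<b} \<Longrightarrow> (g has_real_derivative g' x) (at x)"
    and sign: "\<And>x. x \<in> {a<..<b} \<Longrightarrow> 0 \<le> g' x * W x"
    and W_mono: "\<And>x y. a < x \<Longrightarrow> x < y \<Longrightarrow> y < b \<Longrightarrow> W x < W y"
  shows "g r \<le> 0"
proof (cases "W r \<ge> 0")
  case True
  have "g r \<le> g b"
  proof (rule DERIV_nonneg_imp_increasing_open[of r b g])
    fix x assume x: "r < x" "x < b"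
    then have "x \<in> {a<..<b}" "W x > 0"
      using True W_mono[of r x] \<open>a < r\<close> by auto
    then show "\<exists>y. (g has_real_derivative y) (at x) \<and> 0 \<le> y"
      using g'[of x] sign[of x] by (auto simp: zero_le_mult_iff)
  qed (use assms(1-3) in \<open>auto intro: continuous_on_subset\<close>)
  with \<open>g b \<le> 0\<close> show ?thesis by simp
next
  case False
  have "g r \<le> g a"
  proof (rule DERIV_nonpos_imp_decreasing_open[of a r g])
    fix x assume x: "a < x" "x < r"
    then have "x \<in> {a<..<b}" "W x < 0"
      using False W_mono[of x r] \<open>r < b\<close> by auto
    then show "\<exists>y. (g has_real_derivative y) (at x) \<and> y \<le> 0"
      using g'[of x] sign[of x] by (auto simp: zero_le_mult_iff)
  qed (use assms(1-3) in \<open>auto intro: continuous_on_subset\<close>)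
  with \<open>g a \<le> 0\<close> show ?thesis by simp
qed

lemma sturm_comparison_no_positive_arc:
  fixes v dv c \<phi> d\<phi> dd\<phi> :: "real \<Rightarrow> real"
  assumes "0 \<le> a" "a < b"
    and v_cont: "continuous_on {a..b} v" and "v a \<le> 0" "v b \<le> 0"
    and v_pos: "\<And>x. x \<in> {a<..<b} \<Longrightarrow> v x > 0"
    and dv: "\<And>x. x \<in> {a<..<b} \<Longrightarrow> (v has_real_derivative dv x) (at x)"
    and v_eq: "\<And>x. x \<in> {a<..<b} \<Longrightarrow> ((\<lambda>s. s * dv s) has_real_derivative c x * v x) (at x)"
    and \<phi>_cont: "continuous_on {a..b} \<phi>" and \<phi>_pos: "\<And>x. x \<in> {a..b} \<Longrightarrow> \<phi> x > 0"
    and d\<phi>: "\<And>x. x \<in> {a<..<b} \<Longrightarrow> (\<phi> has_real_derivative d\<phi> x) (at x)"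
    and dd\<phi>: "\<And>x. x \<in> {a<..<b} \<Longrightarrow> ((\<lambda>s. s * d\<phi> s) has_real_derivative dd\<phi> x) (at x)"
    and supersol: "\<And>x. x \<in> {a<..<b} \<Longrightarrow> dd\<phi> x < c x * \<phi> x"
  shows False
proof -
  define W where "W x = x * dv x * \<phi> x - v x * (x * d\<phi> x)" for x
  define g' where "g' x = (dv x * \<phi> x - v x * d\<phi> x) / (\<phi> x)^2" for x
  \<comment> \<open>the terms \<open>x dv x d\<phi> x\<close> cancel, leaving \<open>W' = v (c \<phi> - dd\<phi>)\<close>\<close>
  have W_deriv: "(W has_real_derivative v x * (c x * \<phi> x - dd\<phi> x)) (at x)"
    if "x \<in> {a<..<b}" for x
  proof -
    have "(W has_real_derivative
        c x * v x * \<phi> x + d\<phi> x * (x * dv x) - (dv x * (x * d\<phi> x) + dd\<phi> x * v x)) (at x)"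
      unfolding W_def[abs_def]
      by (intro DERIV_diff DERIV_mult v_eq dv d\<phi> dd\<phi> that)
    then show ?thesis
      by (simp add: algebra_simps)
  qed
  have W_mono: "W x < W y" if "a < x" "x < y" "y < b" for x y
  proof (rule DERIV_pos_imp_increasing[OF \<open>x < y\<close>])
    fix z assume "x \<le> z" "z \<le> y"
    then have z: "z \<in> {a<..<b}" using that by auto
    then have "0 < v z * (c z * \<phi> z - dd\<phi> z)"
      using v_pos[OF z] supersol[OF z] by simp
    then show "\<exists>l. (W has_real_derivative l) (at z) \<and> 0 < l"
      using W_deriv[OF z] by blast
  qed
  have g_deriv: "((\<lambda>x. v x / \<phi> x) has_real_derivative g' x) (at x)" if "x \<in> {a<..<b}" for x
    using \<phi>_pos[of x] that unfolding g'_def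
    by (auto intro!: derivative_eq_intros dv d\<phi> simp: power2_eq_square)
  have g_sign: "0 \<le> g' x * W x" if "x \<in> {a<..<b}" for x
  proof -
    have "g' x * W x = x * (dv x * \<phi> x - v x * d\<phi> x)^2 / (\<phi> x)^2"
      by (simp add: g'_def W_def power2_eq_square algebra_simps)
    then show ?thesis
      using that \<open>0 \<le> a\<close> by simp
  qed
  have g_cont: "continuous_on {a..b} (\<lambda>x. v x / \<phi> x)"
    using \<phi>_pos by (intro continuous_on_divide v_cont \<phi>_cont) (metis less_irrefl)
  have g_ends: "v a / \<phi> a \<le> 0" "v b / \<phi> b \<le> 0"
    using \<open>v a \<le> 0\<close> \<open>v b \<le> 0\<close> \<phi>_pos[of a] \<phi>_pos[of b] \<open>a < b\<close>
    by (auto simp: divide_nonpos_pos)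
  define m where "m = (a + b) / 2"
  have m: "a < m" "m < b"
    using \<open>a < b\<close> by (auto simp: m_def)
  have "v m / \<phi> m \<le> 0"
    by (rule nonpos_if_deriv_sign_follows_increasing[OF m g_cont g_ends g_deriv g_sign W_mono])
  moreover have "0 < v m / \<phi> m"
    using v_pos[of m] \<phi>_pos[of m] m by simp
  ultimately show False
    by linarith
qed

text \<open>
  The expression is affine in \<open>N\<close> and \<open>L\<close>, so the extreme case \<open>N = 1\<close>, \<open>L = 25/4\<close>
  decides; there it is a quadratic in \<open>t\<close> without real roots.
\<close>

lemma quadratic_test_poly_pos:
  fixes t N L :: real
  assumes "0 \<le> t" "t \<le> 1" "1 \<le> N" "0 \<le> L" "L \<le> 25/4"
  shows "0 < (N - (L + N) * t) * (1 - 9/10 * t) + 18/5 * t"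
proof -
  have "(N - (L + N) * t) * (1 - 9/10 * t) + 18/5 * t
      = (N - 1) * ((1 - t) * (1 - 9/10 * t)) + (25/4 - L) * (t * (1 - 9/10 * t))
        + (261/40 * (t - 91/261)^2 + 2159/10440)"
    by (simp add: power2_eq_square field_simps)
  moreover have "0 \<le> (N - 1) * ((1 - t) * (1 - 9/10 * t))" "0 \<le> (25/4 - L) * (t * (1 - 9/10 * t))"
    using assms by simp_all
  moreover have "0 < 261/40 * (t - 91/261)^2 + 2159/10440"
    by (simp add: add_nonneg_pos)
  ultimately show ?thesis
    by linarith
qed

lemma vortex_coeff_lower_bound:
  fixes \<alpha> R \<kappa> N L r w :: real
  assumes "\<alpha> > 0" "0 < r" and \<kappa>: "1 / \<alpha> - (L + N) / (2 * R^2) \<le> \<kappa>"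
  shows "N / r - (L + N) * r / R^2 < N / r - 2 * r * w^2 / (1 + \<alpha> * w^2) + 2 * \<kappa> * r"
proof -
  have "w^2 / (1 + \<alpha> * w^2) < 1 / \<alpha>"
    using \<open>\<alpha> > 0\<close> by (simp add: field_simps add_pos_nonneg)
  then have "2 * r * (w^2 / (1 + \<alpha> * w^2)) < 2 * r * (1 / \<alpha>)"
    using \<open>0 < r\<close> by (intro mult_strict_left_mono) auto
  then have "2 * r * w^2 / (1 + \<alpha> * w^2) < 2 * r / \<alpha>"
    by simp
  moreover have "2 * r * (1 / \<alpha> - (L + N) / (2 * R^2)) \<le> 2 * r * \<kappa>"
    using \<kappa> \<open>0 < r\<close> by (intro mult_left_mono) auto
  moreover have "2 * r * ((L + N) / (2 * R^2)) = (L + N) * r / R^2"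
    by simp
  ultimately show ?thesis
    by (simp add: right_diff_distrib mult.commute mult.left_commute)
qed

lemma vortex_test_function_supersolution:
  fixes \<alpha> R \<kappa> N L r w :: real
  assumes "\<alpha> > 0" "0 < r" "r < R" "1 \<le> N" "0 \<le> L" "L \<le> 25/4"
    and \<kappa>: "1 / \<alpha> - (L + N) / (2 * R^2) \<le> \<kappa>"
  shows "- 18/5 * r / R^2
    < (N / r - 2 * r * w^2 / (1 + \<alpha> * w^2) + 2 * \<kappa> * r) * (1 - 9/10 * r^2 / R^2)"
proof -
  define t where "t = r^2 / R^2"
  have "r^2 \<le> R^2"
    using assms(2,3) by (intro power_mono) auto
  then have t: "0 \<le> t" "t \<le> 1"
    using assms(2,3) by (auto simp: t_def)
  then have "0 < 1 - 9/10 * r^2 / R^2"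
    by (simp add: t_def)
  then have "(N / r - (L + N) * r / R^2) * (1 - 9/10 * r^2 / R^2)
      < (N / r - 2 * r * w^2 / (1 + \<alpha> * w^2) + 2 * \<kappa> * r) * (1 - 9/10 * r^2 / R^2)"
    using vortex_coeff_lower_bound[OF assms(1,2) \<kappa>] by (rule mult_strict_right_mono[rotated])
  moreover have "r * ((N / r - (L + N) * r / R^2) * (1 - 9/10 * r^2 / R^2) + 18/5 * r / R^2)
      = (N - (L + N) * t) * (1 - 9/10 * t) + 18/5 * t"
    using \<open>0 < r\<close> \<open>r < R\<close> by (simp add: t_def field_simps power2_eq_square)
  then have "0 < r * ((N / r - (L + N) * r / R^2) * (1 - 9/10 * r^2 / R^2) + 18/5 * r / R^2)"
    using quadratic_test_poly_pos[OF t assms(4-6)] by (simp only:)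
  then have "0 < (N / r - (L + N) * r / R^2) * (1 - 9/10 * r^2 / R^2) + 18/5 * r / R^2"
    using \<open>0 < r\<close> by (simp add: zero_less_mult_iff)
  ultimately show ?thesis
    by linarith
qed

lemma vortex_solution_nonpos:
  fixes N \<alpha> R \<kappa> L :: real and v dv :: "real \<Rightarrow> real"
  assumes "R > 0" "\<alpha> > 0" "1 \<le> N" "0 \<le> L" "L \<le> 25/4"
    and \<kappa>: "1 / \<alpha> - (L + N) / (2 * R^2) \<le> \<kappa>"
    and cont: "continuous_on {0..R} v"
    and dv: "\<forall>r\<in>{0<..<R}. (v has_real_derivative dv r) (at r)"
    and ode: "\<forall>r\<in>{0<..<R}. ((\<lambda>s. s * dv s) has_real_derivative
                 N / r * v r - 2 * r * (v r)^3 / (1 + \<alpha> * (v r)^2) + 2 * \<kappa> * r * v r) (at r)"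
    and "v 0 = 0" "v R = 0" "r \<in> {0<..<R}"
  shows "v r \<le> 0"
proof (rule ccontr)
  assume "\<not> v r \<le> 0"
  then obtain a b where ab: "0 \<le> a" "a < b" "b \<le> R" "v a \<le> 0" "v b \<le> 0"
    and v_pos: "\<And>x. x \<in> {a<..<b} \<Longrightarrow> v x > 0"
    using positive_arc[OF cont, of r] assms(10-12) by auto
  define c where "c x = N / x - 2 * x * (v x)^2 / (1 + \<alpha> * (v x)^2) + 2 * \<kappa> * x" for x
  define \<phi> where "\<phi> x = 1 - 9/10 * x^2 / R^2" for x
  have sub: "x \<in> {0<..<R}" if "x \<in> {a<..<b}" for x
    using that ab by auto
  show False
  proof (rule sturm_comparison_no_positive_arc[OF ab(1,2) _ ab(4,5) v_pos, where c = c and \<phi> = \<phi>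
        and d\<phi> = "\<lambda>x. - 9/5 * x / R^2" and dd\<phi> = "\<lambda>x. - 18/5 * x / R^2"])
    show "continuous_on {a..b} v"
      using ab by (intro continuous_on_subset[OF cont]) auto
    show "(v has_real_derivative dv x) (at x)" if "x \<in> {a<..<b}" for x
      using dv sub[OF that] by blast
    show "((\<lambda>s. s * dv s) has_real_derivative c x * v x) (at x)" if "x \<in> {a<..<b}" for x
    proof -
      have "c x * v x = N / x * v x - 2 * x * (v x)^3 / (1 + \<alpha> * (v x)^2) + 2 * \<kappa> * x * v x"
        by (simp add: c_def algebra_simps power3_eq_cube power2_eq_square)
      then show ?thesis
        using ode sub[OF that] by simp
    qed
    show "continuous_on {a..b} \<phi>"
      using \<open>R > 0\<close> unfolding \<phi>_def by (intro continuous_intros) auto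
    show "\<phi> x > 0" if "x \<in> {a..b}" for x
    proof -
      have "x^2 \<le> R^2"
        using that ab by (intro power_mono) auto
      then have "x^2 / R^2 \<le> 1"
        using \<open>R > 0\<close> by simp
      then show ?thesis
        by (simp add: \<phi>_def)
    qed
    show "(\<phi> has_real_derivative - 9/5 * x / R^2) (at x)" for x
      using \<open>R > 0\<close> unfolding \<phi>_def[abs_def]
      by (auto intro!: derivative_eq_intros simp: field_simps power2_eq_square)
    show "((\<lambda>s. s * (- 9/5 * s / R^2)) has_real_derivative - 18/5 * x / R^2) (at x)" for x
      using \<open>R > 0\<close> by (auto intro!: derivative_eq_intros simp: field_simps)
    show "- 18/5 * x / R^2 < c x * \<phi> x" if "x \<in> {a<..<b}" for x
      using vortex_test_function_supersolution[OF \<open>\<alpha> > 0\<close> _ _ assms(3-5) \<kappa>] sub[OF that]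
      by (simp add: c_def \<phi>_def)
  qed
qed

lemma vortex_solution_eq_0:
  fixes N \<alpha> R \<kappa> L :: real and v dv :: "real \<Rightarrow> real"
  assumes "R > 0" "\<alpha> > 0" "1 \<le> N" "0 \<le> L" "L \<le> 25/4"
    and \<kappa>: "1 / \<alpha> - (L + N) / (2 * R^2) \<le> \<kappa>"
    and cont: "continuous_on {0..R} v"
    and dv: "\<forall>r\<in>{0<..<R}. (v has_real_derivative dv r) (at r)"
    and ode: "\<forall>r\<in>{0<..<R}. ((\<lambda>s. s * dv s) has_real_derivative
                 N / r * v r - 2 * r * (v r)^3 / (1 + \<alpha> * (v r)^2) + 2 * \<kappa> * r * v r) (at r)"
    and "v 0 = 0" "v R = 0" "r \<in> {0<..<R}"
  shows "v r = 0"
proof -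
  have "- v r \<le> 0"
  proof (rule vortex_solution_nonpos[OF assms(1-6), where v = "\<lambda>x. - v x" and dv = "\<lambda>x. - dv x"])
    show "continuous_on {0..R} (\<lambda>x. - v x)"
      by (intro continuous_intros cont)
    show "\<forall>r\<in>{0<..<R}. ((\<lambda>x. - v x) has_real_derivative - dv r) (at r)"
      using dv by (auto intro: DERIV_minus)
    show "\<forall>r\<in>{0<..<R}. ((\<lambda>s. s * - dv s) has_real_derivative
        N / r * - v r - 2 * r * (- v r)^3 / (1 + \<alpha> * (- v r)^2) + 2 * \<kappa> * r * - v r) (at r)"
    proof
      fix r assume "r \<in> {0<..<R}"
      then have "((\<lambda>s. - (s * dv s)) has_real_derivative
          - (N / r * v r - 2 * r * (v r)^3 / (1 + \<alpha> * (v r)^2) + 2 * \<kappa> * r * v r)) (at r)"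
        using ode by (intro DERIV_minus) blast
      then show "((\<lambda>s. s * - dv s) has_real_derivative
          N / r * - v r - 2 * r * (- v r)^3 / (1 + \<alpha> * (- v r)^2) + 2 * \<kappa> * r * - v r) (at r)"
        by (simp add: power3_eq_cube)
    qed
  qed (use assms(10-12) in auto)
  moreover have "v r \<le> 0"
    by (rule vortex_solution_nonpos[OF assms])
  ultimately show ?thesis
    by simp
qed

theorem theorem2p1:
  fixes n :: int and \<alpha> R \<kappa> :: real and u du :: "real \<Rightarrow> real"
  assumes hn: "\<bar>n\<bar> \<ge> 1"
    and h\<alpha>: "\<alpha> > 0" and hR: "R > 0"
    and hcont: "continuous_on {0..R} u"
    and hderiv: "\<forall>r\<in>{0<..<R}. (u has_real_derivative du r) (at r)"
    and hode: "\<forall>r\<in>{0<..<R}. ((\<lambda>s. s * du s) has_real_derivative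
                 (real_of_int n)^2 / r * u r - 2 * r * (u r)^3 / (1 + \<alpha> * (u r)^2)
                 + 2 * \<kappa> * r * u r) (at r)"
    and hbc: "u 0 = 0" "u R = 0"
    and hnontriv: "\<exists>r\<in>{0<..<R}. u r \<noteq> 0"
    and hfinite: "energy_density \<alpha> u du integrable_on {0<..<R}"
  shows "\<kappa> < 1 / \<alpha> - (bessel_J0_first_zero^2 + (real_of_int n)^2) / (2 * R^2)"
proof (rule ccontr)
  assume "\<not> ?thesis"
  then have \<kappa>: "1 / \<alpha> - (bessel_J0_first_zero^2 + (real_of_int n)^2) / (2 * R^2) \<le> \<kappa>"
    by simp
  have "1 \<le> \<bar>real_of_int n\<bar>"
    using hn by linarith
  then have n: "1 \<le> (real_of_int n)^2"
    by (metis one_le_power power2_abs)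
  obtain r where r: "r \<in> {0<..<R}" "u r \<noteq> 0"
    using hnontriv by blast
  have "u r = 0"
    by (rule vortex_solution_eq_0[OF hR h\<alpha> n zero_le_power2 bessel_J0_first_zero_sq_le \<kappa>
          hcont hderiv hode hbc r(1)])
  with r(2) show False ..
qed

end
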